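(* If $D\in\mathcal{H}^2$ is cyclic, then $D$ has a nonzero constant term and no zeros in $\mathbb{C}_\sigma$, where $\sigma=\max\{\sigma_a(D),0\}$.
   Context: $\mathcal{H}^2$ is the Hilbert space of Dirichlet series $D=\sum_{n\ge1}a_nn^{-s}$ with $\sum|a_n|^2<\infty$; the constant term is $a_1$. $\mathbb{C}_\sigma=\{s:\mathrm{Re}\,s>\sigma\}$. $\sigma_a(D)\in[-\infty,\infty]$ is the abscissa of absolute convergence of $D$ (the series converges absolutely for $\mathrm{Re}\,s>\sigma_a(D)$ and not for $\mathrm{Re}\,s<\sigma_a(D)$); for $D\in\mathcal{H}^2$, $\sigma_a(D)\le\frac12$. $\mathcal{H}^\infty$ is the set of Dirichlet series extending to bounded holomorphic functions on $\mathbb{C}_0$ (the multiplier algebra of $\mathcal{H}^2$), and $D$ is cyclic if $\{hD:h\in\mathcal{H}^\infty\}$ is dense in $\mathcal{H}^2$. *)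

theory Defs
  imports "HOL-Analysis.Analysis"
begin

text \<open>A Dirichlet series \<open>\<Sum>n\<ge>1. a n * n^(-s)\<close> is represented by its coefficient
  function \<open>a :: nat \<Rightarrow> complex\<close>, with the convention \<open>a 0 = 0\<close>.
  The constant term is \<open>a 1\<close>.\<close>

definition dirichlet_eval :: "(nat \<Rightarrow> complex) \<Rightarrow> complex \<Rightarrow> complex" where
  "dirichlet_eval a s = (\<Sum>n. a n * (of_nat n) powr (- s))"

definition H2 :: "(nat \<Rightarrow> complex) \<Rightarrow> bool" where
  "H2 a \<longleftrightarrow> a 0 = 0 \<and> summable (\<lambda>n. (cmod (a n))\<^sup>2)"

definition abscissa_abs :: "(nat \<Rightarrow> complex) \<Rightarrow> ereal" where
  "abscissa_abs a = Inf {ereal \<sigma> | \<sigma>. summable (\<lambda>n. cmod (a n) * real n powr (- \<sigma>))}"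

definition Hinf :: "(nat \<Rightarrow> complex) \<Rightarrow> bool" where
  "Hinf b \<longleftrightarrow> b 0 = 0 \<and>
     (\<exists>F. F holomorphic_on {s. Re s > 0} \<and> bounded (F ` {s. Re s > 0}) \<and>
        (\<exists>\<sigma>::real. \<forall>s. Re s > \<sigma> \<longrightarrow>
            summable (\<lambda>n. cmod (b n * (of_nat n) powr (- s))) \<and> F s = dirichlet_eval b s))"

definition dconv :: "(nat \<Rightarrow> complex) \<Rightarrow> (nat \<Rightarrow> complex) \<Rightarrow> nat \<Rightarrow> complex" where
  "dconv b a n = (if n = 0 then 0 else (\<Sum>d\<in>{d. d dvd n}. b d * a (n div d)))"

definition cyclic_H2 :: "(nat \<Rightarrow> complex) \<Rightarrow> bool" where
  "cyclic_H2 a \<longleftrightarrow> H2 a \<and>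
     (\<forall>f. H2 f \<longrightarrow> (\<forall>\<epsilon>>0. \<exists>b. Hinf b \<and>
        summable (\<lambda>n. (cmod (f n - dconv b a n))\<^sup>2) \<and>
        (\<Sum>n. (cmod (f n - dconv b a n))\<^sup>2) < \<epsilon>))"

end

theory Submission
  imports Defs "HOL-Complex_Analysis.Complex_Analysis"
begin

text \<open>
  If \<open>a\<^sub>1 = 0\<close> then every \<open>hD\<close> has constant term \<open>h\<^sub>1 a\<^sub>1 = 0\<close> and stays at distance at
  least \<open>1\<close> from the constant series \<open>1\<close>, so \<open>D\<close> is not cyclic.

  For the zeros, let \<open>f\<^sub>N\<close> denote the part of a Dirichlet series \<open>f\<close> supported on the
  \<open>N\<close>-smooth integers. Restriction to smooth integers is multiplicative, \<open>(hD)\<^sub>N = h\<^sub>N D\<^sub>N\<close>,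
  and for \<open>Re z > 0\<close> the functional \<open>f \<mapsto> f\<^sub>N(z)\<close> is bounded on \<open>\<H>\<^sup>2\<close> because the sum of
  \<open>n powr (-2 Re z)\<close> over the \<open>N\<close>-smooth \<open>n\<close> is a finite Euler product. It is also defined
  on \<open>\<H>\<^sup>\<infinity>\<close>, since the coefficients of a bounded Dirichlet series grow more slowly than any
  power \<open>n powr \<epsilon>\<close> (Perron's formula, with the line of integration moved into \<open>\<complex>\<^sub>0\<close>).
  Hence \<open>D\<^sub>N(z) = 0\<close> would give \<open>(1 - hD)\<^sub>N(z) = 1\<close> for all \<open>h\<close>, keeping \<open>hD\<close> away
  from \<open>1\<close>; so a cyclic \<open>D\<close> has zero-free \<open>D\<^sub>N\<close> on \<open>\<complex>\<^sub>0\<close>. As \<open>D\<^sub>N \<rightarrow> D\<close> locally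
  uniformly on the half-plane of absolute convergence and \<open>D\<close> is not identically zero there
  (it tends to \<open>a\<^sub>1\<close>), Hurwitz's theorem shows that \<open>D\<close> has no zeros there either.
\<close>

section \<open>Absolutely convergent Dirichlet series\<close>

lemma norm_of_nat_powr: "norm (of_nat n powr s :: complex) = real n powr Re s"
  by (subst norm_powr_real_powr) auto

lemma of_nat_mult_powr: "(of_nat (m * k) powr s :: complex) = of_nat m powr s * of_nat k powr s"
  by (subst of_nat_mult, rule powr_times_real) auto

lemma real_of_nat_powr_neg_antimono: "\<sigma> \<le> t \<Longrightarrow> real n powr (- t) \<le> real n powr (- \<sigma>)"
  by (cases "n = 0") (auto intro: powr_mono)

definition dirichlet_abs_summable :: "(nat \<Rightarrow> complex) \<Rightarrow> real \<Rightarrow> bool" where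
  "dirichlet_abs_summable a \<sigma> \<longleftrightarrow> summable (\<lambda>n. cmod (a n) * real n powr (- \<sigma>))"

lemma dirichlet_abs_summable_mono:
  assumes "dirichlet_abs_summable a \<sigma>" "\<sigma> \<le> \<sigma>'"
  shows "dirichlet_abs_summable a \<sigma>'"
  using assms unfolding dirichlet_abs_summable_def
  by (elim summable_comparison_test') (simp add: mult_left_mono real_of_nat_powr_neg_antimono)

lemma abscissa_abs_less_imp_summable:
  assumes "max (abscissa_abs a) 0 < ereal x"
  obtains \<sigma> where "0 < \<sigma>" "\<sigma> < x" "dirichlet_abs_summable a \<sigma>"
proof -
  obtain \<sigma>\<^sub>0 where "\<sigma>\<^sub>0 < x" "dirichlet_abs_summable a \<sigma>\<^sub>0"
    using assms by (auto simp: abscissa_abs_def Inf_less_iff dirichlet_abs_summable_def)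
  moreover have "0 < x"
    using assms by simp
  ultimately show ?thesis
    using dirichlet_abs_summable_mono[of a \<sigma>\<^sub>0 "(max \<sigma>\<^sub>0 0 + x) / 2"]
    by (intro that[of "(max \<sigma>\<^sub>0 0 + x) / 2"]) auto
qed

lemma norm_dirichlet_term_le:
  "\<sigma> \<le> Re s \<Longrightarrow> norm (a n * of_nat n powr (- s)) \<le> cmod (a n) * real n powr (- \<sigma>)"
  by (simp add: norm_mult norm_of_nat_powr mult_left_mono real_of_nat_powr_neg_antimono)

lemma summable_norm_dirichlet_terms:
  assumes "dirichlet_abs_summable a \<sigma>" "\<sigma> \<le> Re s"
  shows "summable (\<lambda>n. norm (a n * of_nat n powr (- s)))"
  using assms unfolding dirichlet_abs_summable_def
  by (elim summable_comparison_test') (simp add: norm_dirichlet_term_le)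

lemma dirichlet_eval_diff:
  assumes "dirichlet_abs_summable a \<sigma>" "dirichlet_abs_summable b \<sigma>" "\<sigma> \<le> Re s"
  shows "dirichlet_eval a s - dirichlet_eval b s = dirichlet_eval (\<lambda>n. a n - b n) s"
  unfolding dirichlet_eval_def left_diff_distrib
  by (intro suminf_diff summable_norm_cancel[OF summable_norm_dirichlet_terms[OF assms(1,3)]]
      summable_norm_cancel[OF summable_norm_dirichlet_terms[OF assms(2,3)]])

lemma uniform_limit_dirichlet_partial_sums:
  assumes "dirichlet_abs_summable a \<sigma>"
  shows "uniform_limit {s. \<sigma> \<le> Re s} (\<lambda>k s. \<Sum>n<k. a n * of_nat n powr (- s))
           (dirichlet_eval a) sequentially"
  unfolding dirichlet_eval_def
  using assms unfolding dirichlet_abs_summable_def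
  by (intro Weierstrass_m_test) (auto intro: norm_dirichlet_term_le)

lemma holomorphic_on_dirichlet_eval:
  assumes "dirichlet_abs_summable a \<sigma>"
  shows "dirichlet_eval a holomorphic_on {s. \<sigma> < Re s}"
proof (rule holomorphic_uniform_sequence)
  show "open {s. \<sigma> < Re s}" by (simp add: open_halfspace_Re_gt)
  show "(\<lambda>s. \<Sum>n<k. a n * of_nat n powr (- s)) holomorphic_on {s. \<sigma> < Re s}" for k
    by (intro holomorphic_intros holomorphic_on_powr_right)
  fix x assume x: "x \<in> {s. \<sigma> < Re s}"
  define d where "d = (Re x - \<sigma>) / 2"
  have "0 < d" using x by (simp add: d_def)
  have ball: "cball x d \<subseteq> {s. \<sigma> + d \<le> Re s}"
  proof
    fix z assume "z \<in> cball x d"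
    then have "\<bar>Re x - Re z\<bar> \<le> d"
      using abs_Re_le_cmod[of "x - z"] by (simp add: dist_norm)
    then have "Re x - Re z \<le> d" by (simp add: abs_le_iff)
    then show "z \<in> {s. \<sigma> + d \<le> Re s}" using x by (simp add: d_def field_simps)
  qed
  show "\<exists>d>0. cball x d \<subseteq> {s. \<sigma> < Re s} \<and>
    uniform_limit (cball x d) (\<lambda>k s. \<Sum>n<k. a n * of_nat n powr (- s)) (dirichlet_eval a) sequentially"
  proof (intro exI conjI)
    show "0 < d" by fact
    show "cball x d \<subseteq> {s. \<sigma> < Re s}"
      using ball \<open>0 < d\<close> by (smt (verit) mem_Collect_eq subset_iff)
    have summable: "dirichlet_abs_summable a (\<sigma> + d)"
      by (rule dirichlet_abs_summable_mono[OF assms]) (use \<open>0 < d\<close> in simp)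
    show "uniform_limit (cball x d) (\<lambda>k s. \<Sum>n<k. a n * of_nat n powr (- s))
        (dirichlet_eval a) sequentially"
      using uniform_limit_dirichlet_partial_sums[OF summable] ball by (rule uniform_limit_on_subset)
  qed
qed

lemma norm_dirichlet_eval_sub_const_le:
  assumes summable: "dirichlet_abs_summable a \<sigma>" and "a 0 = 0" and "\<sigma> \<le> Re s"
  shows "norm (dirichlet_eval a s - a 1) \<le> 2 powr (\<sigma> - Re s) * (\<Sum>n. cmod (a n) * real n powr (- \<sigma>))"
proof -
  define e :: "nat \<Rightarrow> complex" where "e n = (if n = 1 then a 1 else 0)" for n
  have "dirichlet_abs_summable e \<sigma>"
    unfolding dirichlet_abs_summable_def by (rule summable_finite[of "{1}"]) (auto simp: e_def)
  moreover have "dirichlet_eval e s = a 1"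
    unfolding dirichlet_eval_def by (subst suminf_finite[of "{1}"]) (auto simp: e_def)
  ultimately have "dirichlet_eval a s - a 1 = dirichlet_eval (\<lambda>n. a n - e n) s"
    using dirichlet_eval_diff[OF summable _ \<open>\<sigma> \<le> Re s\<close>] by metis
  have bound: "cmod (a n - e n) * real n powr (- Re s) \<le> 2 powr (\<sigma> - Re s) * (cmod (a n) * real n powr (- \<sigma>))"
    for n
  proof (cases "n \<le> 1")
    case True
    then show ?thesis using \<open>a 0 = 0\<close> by (auto simp: e_def le_Suc_eq)
  next
    case False
    have "real n powr (\<sigma> - Re s) \<le> 2 powr (\<sigma> - Re s)"
      using False \<open>\<sigma> \<le> Re s\<close> by (intro powr_mono2') auto
    moreover have "real n powr (- Re s) = real n powr (\<sigma> - Re s) * real n powr (- \<sigma>)"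
      by (simp add: powr_add[symmetric])
    ultimately have "real n powr (- Re s) \<le> 2 powr (\<sigma> - Re s) * real n powr (- \<sigma>)"
      by (simp add: mult_right_mono)
    then show ?thesis
      using False by (simp add: e_def mult.left_commute mult_left_mono)
  qed
  have "norm (dirichlet_eval (\<lambda>n. a n - e n) s) \<le>
      (\<Sum>n. 2 powr (\<sigma> - Re s) * (cmod (a n) * real n powr (- \<sigma>)))"
    unfolding dirichlet_eval_def using summable bound
    by (intro norm_suminf_le summable_mult) (simp_all add: norm_mult norm_of_nat_powr dirichlet_abs_summable_def)
  also have "\<dots> = 2 powr (\<sigma> - Re s) * (\<Sum>n. cmod (a n) * real n powr (- \<sigma>))"
    using summable unfolding dirichlet_abs_summable_def by (rule suminf_mult)
  finally show ?thesis
    using \<open>dirichlet_eval a s - a 1 = dirichlet_eval (\<lambda>n. a n - e n) s\<close> by simp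
qed

lemma dirichlet_eval_nonzero_somewhere:
  assumes "dirichlet_abs_summable a \<sigma>" "a 0 = 0" "a 1 \<noteq> 0"
  obtains s where "\<sigma> < Re s" "dirichlet_eval a s \<noteq> 0"
proof -
  define S where "S = (\<Sum>n. cmod (a n) * real n powr (- \<sigma>))"
  have "(\<lambda>k. (1 / 2) ^ k * S) \<longlonglongrightarrow> 0"
    by (intro tendsto_mult_left_zero LIMSEQ_power_zero) simp
  then obtain N where N: "\<And>k. k \<ge> N \<Longrightarrow> (1 / 2) ^ k * S < cmod (a 1)"
    using order_tendstoD(2)[of _ 0 _ "cmod (a 1)"] \<open>a 1 \<noteq> 0\<close> by (force simp: eventually_sequentially)
  define s :: complex where "s = of_real (\<sigma> + real (Suc N))"
  have "norm (dirichlet_eval a s - a 1) \<le> 2 powr (\<sigma> - Re s) * S"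
    unfolding S_def using assms(1,2) by (rule norm_dirichlet_eval_sub_const_le) (simp add: s_def)
  also have "2 powr (\<sigma> - Re s) = (1 / 2) ^ Suc N"
  proof -
    have pow: "2 powr (- real k) = (1 / 2 :: real) ^ k" for k
      by (simp add: powr_minus powr_realpow power_one_over inverse_eq_divide)
    have "\<sigma> - Re s = - real (Suc N)" by (simp add: s_def)
    then show ?thesis by (simp only: pow)
  qed
  also have "\<dots> * S < cmod (a 1)" by (rule N) simp
  finally have "dirichlet_eval a s \<noteq> 0" by auto
  then show ?thesis by (rule that[rotated]) (simp add: s_def)
qed

lemma has_sum_mult_Times:
  fixes f g :: "_ \<Rightarrow> 'a :: {real_normed_field, banach}"
  assumes f: "(\<lambda>x. norm (f x)) summable_on A" and g: "(\<lambda>y. norm (g y)) summable_on B"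
  shows "((\<lambda>(x, y). f x * g y) has_sum (infsum f A * infsum g B)) (A \<times> B)"
proof -
  have "(\<lambda>y. norm (f x * g y)) summable_on B" for x
    using summable_on_cmult_right[OF g, of "norm (f x)"] by (simp add: norm_mult)
  moreover have "(\<lambda>x. norm (infsum (\<lambda>y. norm (f x * g y)) B)) summable_on A"
    using summable_on_cmult_left[OF f, of "infsum (\<lambda>y. norm (g y)) B"]
    by (simp add: norm_mult infsum_cmult_right' infsum_nonneg)
  ultimately have "(\<lambda>p. norm (case p of (x, y) \<Rightarrow> f x * g y)) summable_on A \<times> B"
    using Infinite_Sum.abs_summable_on_Sigma_iff[of "\<lambda>(x, y). f x * g y" A "\<lambda>_. B"]
    by (simp add: case_prod_unfold)
  then have summable: "(\<lambda>(x, y). f x * g y) summable_on A \<times> B"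
    by (rule abs_summable_summable)
  have "infsum (\<lambda>(x, y). f x * g y) (A \<times> B) = infsum (\<lambda>x. infsum (\<lambda>y. f x * g y) B) A"
    using infsum_Sigma_banach[OF summable] by simp
  also have "\<dots> = infsum f A * infsum g B"
    by (simp add: infsum_cmult_right' infsum_cmult_left')
  finally show ?thesis
    using summable by (metis has_sum_infsum)
qed

lemma has_sum_dirichlet_convolution:
  fixes U V :: "nat \<Rightarrow> 'a :: {real_normed_field, banach}"
  assumes "U 0 = 0" "V 0 = 0" and U: "summable (\<lambda>n. norm (U n))" and V: "summable (\<lambda>n. norm (V n))"
  shows "((\<lambda>n. \<Sum>d | d dvd n. U d * V (n div d)) has_sum (suminf U * suminf V)) UNIV"
proof -
  have "infsum U UNIV = suminf U" "infsum V UNIV = suminf V"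
    using norm_summable_imp_has_sum[OF U summable_sums[OF summable_norm_cancel[OF U]]]
      norm_summable_imp_has_sum[OF V summable_sums[OF summable_norm_cancel[OF V]]]
    by (simp_all add: infsumI)
  moreover have "(\<lambda>n. norm (U n)) summable_on UNIV" "(\<lambda>n. norm (V n)) summable_on UNIV"
    using U V by (simp_all add: summable_on_UNIV_nonneg_real_iff)
  ultimately have "((\<lambda>(d, k). U d * V k) has_sum (suminf U * suminf V)) (UNIV \<times> UNIV)"
    using has_sum_mult_Times by metis
  then have "((\<lambda>(d, k). U d * V k) has_sum (suminf U * suminf V)) {(d, k). 0 < d \<and> 0 < k}"
    by (rule has_sum_cong_neutral[THEN iffD1, rotated -1]) (use assms(1,2) in \<open>auto intro!: gr0I\<close>)
  also have "?this \<longleftrightarrow> ((\<lambda>(n, d). U d * V (n div d)) has_sum (suminf U * suminf V))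
      (SIGMA n:{n. 0 < n}. {d. d dvd n})"
    by (rule has_sum_reindex_bij_witness[where i = "\<lambda>(d, k). (d * k, d)" and j = "\<lambda>(n, d). (d, n div d)",
          symmetric]) (auto elim!: dvdE)
  finally have "((\<lambda>n. \<Sum>d | d dvd n. U d * V (n div d)) has_sum (suminf U * suminf V)) {n. 0 < n}"
    by (rule has_sum_SigmaD) auto
  then show ?thesis
    by (rule has_sum_cong_neutral[THEN iffD1, rotated -1]) auto
qed

lemma dirichlet_eval_dconv:
  assumes u: "summable (\<lambda>n. norm (u n * of_nat n powr (- s)))"
    and v: "summable (\<lambda>n. norm (v n * of_nat n powr (- s)))"
  shows "summable (\<lambda>n. norm (dconv u v n * of_nat n powr (- s)))"
    and "dirichlet_eval (dconv u v) s = dirichlet_eval u s * dirichlet_eval v s"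
proof -
  define U where "U n = u n * of_nat n powr (- s)" for n
  define V where "V n = v n * of_nat n powr (- s)" for n
  have divisor_sum: "(\<Sum>d | d dvd n. U d * V (n div d)) = dconv u v n * of_nat n powr (- s)" for n
  proof (cases "n = 0")
    case False
    have "U d * V (n div d) = u d * v (n div d) * of_nat n powr (- s)" if "d dvd n" for d
      using that of_nat_mult_powr[of d "n div d" "- s"] by (simp add: U_def V_def)
    then show ?thesis
      using False by (simp add: dconv_def sum_distrib_right)
  qed (simp add: dconv_def)
  have UV: "U 0 = 0" "V 0 = 0" "summable (\<lambda>n. norm (U n))" "summable (\<lambda>n. norm (V n))"
    using u v by (simp_all add: U_def V_def)
  have "((\<lambda>n. dconv u v n * of_nat n powr (- s)) has_sum (suminf U * suminf V)) UNIV"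
    using has_sum_dirichlet_convolution[OF UV] by (simp only: divisor_sum)
  then have "(\<lambda>n. dconv u v n * of_nat n powr (- s)) sums (suminf U * suminf V)"
    by (rule has_sum_imp_sums)
  moreover have "suminf U = dirichlet_eval u s" "suminf V = dirichlet_eval v s"
    by (simp_all add: U_def[abs_def] V_def[abs_def] dirichlet_eval_def)
  ultimately show "dirichlet_eval (dconv u v) s = dirichlet_eval u s * dirichlet_eval v s"
    by (simp add: dirichlet_eval_def sums_iff)
  have "((\<lambda>n. \<Sum>d | d dvd n. norm (U d) * norm (V (n div d))) has_sum
      ((\<Sum>n. norm (U n)) * (\<Sum>n. norm (V n)))) UNIV"
    using has_sum_dirichlet_convolution[of "\<lambda>n. norm (U n)" "\<lambda>n. norm (V n)"] UV by simp
  then have "summable (\<lambda>n. \<Sum>d | d dvd n. norm (U d) * norm (V (n div d)))"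
    by (auto simp: summable_def dest: has_sum_imp_sums)
  then show "summable (\<lambda>n. norm (dconv u v n * of_nat n powr (- s)))"
  proof (rule summable_comparison_test')
    show "norm (norm (dconv u v n * of_nat n powr (- s))) \<le> (\<Sum>d | d dvd n. norm (U d) * norm (V (n div d)))"
      for n
      using norm_sum[of "\<lambda>d. U d * V (n div d)" "{d. d dvd n}"] by (simp add: divisor_sum norm_mult)
  qed
qed

section \<open>Smooth numbers\<close>

definition smooth :: "nat \<Rightarrow> nat set" where
  "smooth N = {n. 0 < n \<and> (\<forall>p. prime p \<longrightarrow> p dvd n \<longrightarrow> p \<le> N)}"

lemma smooth_pos: "n \<in> smooth N \<Longrightarrow> 0 < n"
  by (simp add: smooth_def)

lemma one_in_smooth: "1 \<in> smooth N"
  by (simp add: smooth_def)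

lemma mult_in_smooth: "m \<in> smooth N \<Longrightarrow> k \<in> smooth N \<Longrightarrow> m * k \<in> smooth N"
  by (auto simp: smooth_def prime_dvd_mult_iff)

lemma dvd_in_smooth: "n \<in> smooth N \<Longrightarrow> d dvd n \<Longrightarrow> d \<in> smooth N"
  by (auto simp: smooth_def intro: dvd_trans)

lemma in_smooth_if_le: "0 < n \<Longrightarrow> n \<le> N \<Longrightarrow> n \<in> smooth N"
  by (auto simp: smooth_def dest: dvd_imp_le)

lemma smooth_eq_prod_multiplicity:
  assumes "n \<in> smooth N"
  shows "n = (\<Prod>p | prime p \<and> p \<le> N. p ^ multiplicity p n)"
proof -
  have "n = (\<Prod>p\<in>prime_factors n. p ^ multiplicity p n)"
    using smooth_pos[OF assms] by (rule prime_factorization_nat)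
  also have "\<dots> = (\<Prod>p | prime p \<and> p \<le> N. p ^ multiplicity p n)"
    using assms by (intro prod.mono_neutral_left)
      (auto simp: smooth_def prime_factors_dvd prime_factors_multiplicity prime_multiplicity_gt_zero_iff)
  finally show ?thesis .
qed

lemma inj_on_smooth_multiplicities:
  "inj_on (\<lambda>n. restrict (\<lambda>p. multiplicity p n) {p. prime p \<and> p \<le> N}) (smooth N)"
proof (rule inj_onI)
  fix n m
  assume n: "n \<in> smooth N" and m: "m \<in> smooth N"
    and eq: "restrict (\<lambda>p. multiplicity p n) {p. prime p \<and> p \<le> N} =
      restrict (\<lambda>p. multiplicity p m) {p. prime p \<and> p \<le> N}"
  have "multiplicity p n = multiplicity p m" if "prime p" "p \<le> N" for p
    using fun_cong[OF eq, of p] that by simp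
  then have "(\<Prod>p | prime p \<and> p \<le> N. p ^ multiplicity p n) = (\<Prod>p | prime p \<and> p \<le> N. p ^ multiplicity p m)"
    by (intro prod.cong refl) simp
  then show "n = m"
    using smooth_eq_prod_multiplicity[OF n] smooth_eq_prod_multiplicity[OF m] by simp
qed

lemma multiplicity_less_self:
  assumes "prime p" "0 < n"
  shows "multiplicity p n < (n :: nat)"
proof -
  have "multiplicity p n < 2 ^ multiplicity p n" by (rule less_exp)
  also have "\<dots> \<le> p ^ multiplicity p n"
    using assms(1) by (intro power_mono) (auto simp: prime_ge_2_nat)
  also have "\<dots> \<le> n"
    using assms(2) by (intro dvd_imp_le multiplicity_dvd)
  finally show ?thesis .
qed

lemma sum_geometric_le:
  fixes q :: real
  assumes "0 \<le> q" "q < 1"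
  shows "(\<Sum>j<K. q ^ j) \<le> 1 / (1 - q)"
proof -
  have "(\<Sum>j<K. q ^ j) \<le> (\<Sum>j. q ^ j)"
    using assms by (intro sum_le_suminf summable_geometric) auto
  also have "\<dots> = 1 / (1 - q)"
    using assms by (simp add: suminf_geometric)
  finally show ?thesis .
qed

lemma smooth_powr_eq_prod:
  assumes "n \<in> smooth N"
  shows "real n powr r = (\<Prod>p | prime p \<and> p \<le> N. (real p powr r) ^ multiplicity p n)"
proof -
  have "real n powr r = (\<Prod>p | prime p \<and> p \<le> N. real p ^ multiplicity p n) powr r"
    by (subst smooth_eq_prod_multiplicity[OF assms]) simp
  also have "\<dots> = (\<Prod>p | prime p \<and> p \<le> N. (real p powr r) ^ multiplicity p n)"
    unfolding prod_powr_distrib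
    by (intro prod.cong refl) (auto simp: powr_power powr_powr prime_gt_0_nat powr_realpow[symmetric] mult.commute)
  finally show ?thesis .
qed

(* The expanded Euler product over the primes up to N dominates the sum, because an N-smooth
   number is determined by its exponents at these primes. *)
lemma sum_smooth_powr_le:
  assumes "0 < y" "finite A" "A \<subseteq> smooth N"
  shows "(\<Sum>n\<in>A. real n powr (- y)) \<le> (\<Prod>p | prime p \<and> p \<le> N. 1 / (1 - real p powr (- y)))"
proof -
  define P where "P = {p. prime p \<and> p \<le> N}"
  define K where "K = Suc (Max A)"
  define v where "v n = restrict (\<lambda>p. multiplicity p n) P" for n
  define h where "h e = (\<Prod>p\<in>P. (real p powr (- y)) ^ e p)" for e
  have "inj_on v A"
    using inj_on_subset[OF inj_on_smooth_multiplicities assms(3)] by (simp add: v_def[abs_def] P_def)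
  have "multiplicity p n < K" if "n \<in> A" "p \<in> P" for n p
  proof -
    have "0 < n" using that(1) assms(3) by (auto dest: smooth_pos)
    with that(2) have "multiplicity p n < n" by (intro multiplicity_less_self) (simp_all add: P_def)
    also have "n < K" using Max_ge[OF assms(2) that(1)] by (simp add: K_def)
    finally show ?thesis .
  qed
  then have "v ` A \<subseteq> PiE P (\<lambda>_. {..<K})"
    by (auto simp: v_def)
  have "(\<Sum>n\<in>A. real n powr (- y)) = (\<Sum>n\<in>A. h (v n))"
    using assms(3) by (intro sum.cong refl) (auto simp: h_def v_def P_def smooth_powr_eq_prod)
  also have "\<dots> = (\<Sum>e\<in>v ` A. h e)"
    by (simp add: sum.reindex[OF \<open>inj_on v A\<close>])
  also have "\<dots> \<le> (\<Sum>e\<in>PiE P (\<lambda>_. {..<K}). h e)"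
    using \<open>v ` A \<subseteq> _\<close> by (intro sum_mono2) (auto simp: h_def P_def finite_PiE intro: prod_nonneg)
  also have "\<dots> = (\<Prod>p\<in>P. \<Sum>j<K. (real p powr (- y)) ^ j)"
    unfolding h_def by (rule prod_sum_PiE[symmetric]) (simp_all add: P_def)
  also have "\<dots> \<le> (\<Prod>p\<in>P. 1 / (1 - real p powr (- y)))"
    using assms(1) prime_gt_1_nat
    by (intro prod_mono conjI sum_nonneg sum_geometric_le) (auto simp: P_def powr_less_one)
  finally show ?thesis by (simp add: P_def)
qed

definition smooth_part :: "nat \<Rightarrow> (nat \<Rightarrow> 'a :: zero) \<Rightarrow> nat \<Rightarrow> 'a" where
  "smooth_part N a n = (if n \<in> smooth N then a n else 0)"

lemma summable_smooth_part_powr: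
  assumes "0 < y"
  shows "summable (smooth_part N (\<lambda>n. real n powr (- y)))"
proof (rule summableI_nonneg_bounded)
  show "0 \<le> smooth_part N (\<lambda>n. real n powr (- y)) n" for n
    by (simp add: smooth_part_def)
  show "sum (smooth_part N (\<lambda>n. real n powr (- y))) {..<k} \<le>
      (\<Prod>p | prime p \<and> p \<le> N. 1 / (1 - real p powr (- y)))" for k
    using sum_smooth_powr_le[OF assms, of "{..<k} \<inter> smooth N" N]
    by (simp add: smooth_part_def sum.inter_restrict)
qed

lemma smooth_part_dconv: "smooth_part N (dconv b a) = dconv (smooth_part N b) (smooth_part N a)"
proof
  fix n
  show "smooth_part N (dconv b a) n = dconv (smooth_part N b) (smooth_part N a) n"
  proof (cases "n \<in> smooth N")
    case True
    then have "d \<in> smooth N" "n div d \<in> smooth N" if "d dvd n" for d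
      using that by (metis dvd_in_smooth dvd_mult_div_cancel dvd_triv_right)+
    then show ?thesis
      using True by (auto simp: smooth_part_def dconv_def intro!: sum.cong)
  next
    case False
    have "smooth_part N b d * smooth_part N a (n div d) = 0" if "d dvd n" for d
      using False mult_in_smooth[of d N "n div d"] that by (auto simp: smooth_part_def)
    then have "dconv (smooth_part N b) (smooth_part N a) n = 0"
      by (auto simp: dconv_def intro!: sum.neutral)
    then show ?thesis
      using False by (simp add: smooth_part_def)
  qed
qed

lemma dirichlet_abs_summable_smooth_part:
  "dirichlet_abs_summable a \<sigma> \<Longrightarrow> dirichlet_abs_summable (smooth_part N a) \<sigma>"
  unfolding dirichlet_abs_summable_def
  by (elim summable_comparison_test') (simp add: smooth_part_def)

lemma tendsto_suminf_tail:
  fixes f :: "nat \<Rightarrow> 'a :: real_normed_vector"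
  assumes "summable f"
  shows "(\<lambda>N. \<Sum>n. if n \<le> N then 0 else f n) \<longlonglongrightarrow> 0"
proof -
  have "(\<lambda>n. if n \<in> {..N} then 0 else f n) sums (suminf f - (\<Sum>n\<le>N. f n))" for N
    by (intro sums_If_finite_set'[OF summable_sums[OF assms]]) (simp_all add: sum_negf)
  then have "(\<Sum>n. if n \<le> N then 0 else f n) = suminf f - (\<Sum>n\<le>N. f n)" for N
    by (simp add: sums_iff)
  moreover have "(\<lambda>N. suminf f - (\<Sum>n\<le>N. f n)) \<longlonglongrightarrow> suminf f - suminf f"
    by (intro tendsto_diff tendsto_const summable_LIMSEQ' assms)
  ultimately show ?thesis by simp
qed

lemma uniform_limit_smooth_part:
  assumes summable: "dirichlet_abs_summable a \<sigma>" and "a 0 = 0"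
  shows "uniform_limit {s. \<sigma> \<le> Re s} (\<lambda>N. dirichlet_eval (smooth_part N a)) (dirichlet_eval a) sequentially"
proof (rule uniform_limitI)
  fix e :: real assume "0 < e"
  define \<gamma> where "\<gamma> n = cmod (a n) * real n powr (- \<sigma>)" for n
  define T where "T N = (\<Sum>n. if n \<le> N then 0 else \<gamma> n)" for N
  have "summable \<gamma>" using summable by (simp add: \<gamma>_def[abs_def] dirichlet_abs_summable_def)
  have "dist (dirichlet_eval (smooth_part N a) s) (dirichlet_eval a s) \<le> T N" if "\<sigma> \<le> Re s" for N s
  proof -
    have bound: "cmod (a n - smooth_part N a n) * real n powr (- \<sigma>) \<le> (if n \<le> N then 0 else \<gamma> n)" for n
      using \<open>a 0 = 0\<close> in_smooth_if_le[of n N] by (cases "n = 0") (auto simp: smooth_part_def \<gamma>_def)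
    have termwise: "norm ((a n - smooth_part N a n) * of_nat n powr (- s)) \<le> (if n \<le> N then 0 else \<gamma> n)"
      for n
      using norm_dirichlet_term_le[OF that, of "\<lambda>n. a n - smooth_part N a n" n] bound[of n] by simp
    have "summable (\<lambda>n. if n \<le> N then 0 else \<gamma> n)"
      using \<open>summable \<gamma>\<close> by (rule summable_comparison_test') (simp add: \<gamma>_def)
    with termwise have "norm (dirichlet_eval (\<lambda>n. a n - smooth_part N a n) s) \<le> T N"
      unfolding dirichlet_eval_def T_def by (rule norm_suminf_le)
    then show ?thesis
      using dirichlet_eval_diff[OF summable dirichlet_abs_summable_smooth_part[OF summable] that]
      by (simp add: dist_norm norm_minus_commute)
  qed
  moreover have "eventually (\<lambda>N. T N < e) sequentially"
    unfolding T_def using tendsto_suminf_tail[OF \<open>summable \<gamma>\<close>] \<open>0 < e\<close> by (rule order_tendstoD)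
  ultimately show "eventually (\<lambda>N. \<forall>s\<in>{s. \<sigma> \<le> Re s}.
      dist (dirichlet_eval (smooth_part N a) s) (dirichlet_eval a s) < e) sequentially"
    by (auto elim!: eventually_mono intro: le_less_trans)
qed

section \<open>Coefficients of bounded Dirichlet series\<close>

definition exp_linepath_integral :: "complex \<Rightarrow> complex \<Rightarrow> real \<Rightarrow> complex" where
  "exp_linepath_integral A B w =
    (if w = 0 then B - A else (exp (B * of_real w) - exp (A * of_real w)) / of_real w)"

lemma has_contour_integral_exp_linepath:
  "((\<lambda>s. exp (s * of_real w)) has_contour_integral exp_linepath_integral A B w) (linepath A B)"
proof (cases "w = 0")
  case True
  have "((\<lambda>s. s) has_field_derivative 1) (at s within UNIV)" for s
    by (rule DERIV_ident)
  from contour_integral_primitive[OF this valid_path_linepath] show ?thesis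
    using True by (simp add: exp_linepath_integral_def)
next
  case False
  have "((\<lambda>s. exp (s * of_real w) / of_real w) has_field_derivative exp (s * of_real w)) (at s within UNIV)"
    for s
    using False by (auto intro!: derivative_eq_intros)
  from contour_integral_primitive[OF this valid_path_linepath] show ?thesis
    using False by (simp add: exp_linepath_integral_def diff_divide_distrib)
qed

lemma abs_ln_diff_nat_ge:
  assumes "0 < m" "0 < n" "m \<noteq> n"
  shows "1 / (real n + 1) \<le> \<bar>ln (real n) - ln (real m)\<bar>"
proof (cases "m < n")
  case True
  have "ln (real m / real n) \<le> real m / real n - 1"
    using assms by (intro ln_le_minus_one) auto
  moreover have "1 / (real n + 1) \<le> 1 - real m / real n"
  proof -
    have "real m * (real n + 1) \<le> (real n - 1) * (real n + 1)"
      using True by (intro mult_right_mono) auto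
    then show ?thesis
      using assms by (simp add: field_simps)
  qed
  ultimately show ?thesis
    using assms by (simp add: ln_div)
next
  case False
  have "ln (real n / real m) \<le> real n / real m - 1"
    using assms by (intro ln_le_minus_one) auto
  moreover have "1 / (real n + 1) \<le> 1 - real n / real m"
  proof -
    have "real n * (real n + 1) \<le> real n * real m"
      using False assms by (intro mult_left_mono) auto
    then show ?thesis
      using assms by (simp add: field_simps)
  qed
  ultimately show ?thesis
    using assms by (simp add: ln_div)
qed

lemma norm_exp_linepath_integral_le:
  assumes "Re A = c" "Re B = c" "w \<noteq> 0"
  shows "norm (exp_linepath_integral A B w) \<le> 2 * exp (c * w) / \<bar>w\<bar>"
proof -
  have "norm (exp (B * of_real w) - exp (A * of_real w)) \<le>
      norm (exp (B * of_real w)) + norm (exp (A * of_real w))"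
    by (rule norm_triangle_ineq4)
  also have "\<dots> = 2 * exp (c * w)"
    using assms by (simp add: norm_exp_eq_Re)
  finally show ?thesis
    using assms(3) by (simp add: exp_linepath_integral_def norm_divide divide_right_mono)
qed

lemma exp_mult_ln_diff_nat:
  "0 < m \<Longrightarrow> 0 < n \<Longrightarrow> exp (x * (ln (real n) - ln (real m))) = real n powr x * real m powr (- x)"
  by (simp add: powr_def right_diff_distrib exp_diff exp_minus field_simps)

lemma norm_exp_linepath_integral_ln_le:
  assumes "0 < m" "0 < n" "m \<noteq> n" "Re A = c" "Re B = c"
  shows "norm (exp_linepath_integral A B (ln (real n) - ln (real m))) \<le>
    2 * (real n + 1) * (real n powr c * real m powr (- c))"
proof -
  define w where "w = ln (real n) - ln (real m)"
  have "1 / (real n + 1) \<le> \<bar>w\<bar>"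
    using abs_ln_diff_nat_ge[OF assms(1-3)] by (simp add: w_def)
  moreover from this have "w \<noteq> 0"
    by (auto simp: divide_le_0_iff)
  ultimately have "1 / \<bar>w\<bar> \<le> real n + 1"
    by (simp add: field_simps)
  have "norm (exp_linepath_integral A B w) \<le> 2 * exp (c * w) / \<bar>w\<bar>"
    using assms(4,5) \<open>w \<noteq> 0\<close> by (rule norm_exp_linepath_integral_le)
  also have "\<dots> = 2 * exp (c * w) * (1 / \<bar>w\<bar>)"
    by simp
  also have "\<dots> \<le> 2 * exp (c * w) * (real n + 1)"
    using \<open>1 / \<bar>w\<bar> \<le> real n + 1\<close> by (intro mult_left_mono) simp_all
  also have "\<dots> = 2 * (real n + 1) * exp (c * w)"
    by simp
  also have "exp (c * w) = real n powr c * real m powr (- c)"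
    unfolding w_def by (rule exp_mult_ln_diff_nat[OF assms(1,2)])
  finally show ?thesis
    unfolding w_def .
qed

lemma has_contour_integral_suminf_linepath:
  assumes "uniform_limit (path_image (linepath A B)) (\<lambda>K s. \<Sum>m<K. f m s) g sequentially"
    and "\<And>m. (f m has_contour_integral i m) (linepath A B)"
    and "\<And>m. continuous_on (path_image (linepath A B)) (f m)"
  obtains J where "(g has_contour_integral J) (linepath A B)" "i sums J"
proof -
  have "continuous_on (path_image (linepath A B)) (\<lambda>s. \<Sum>m<K. f m s)" for K
    using assms(3) by (intro continuous_on_sum) auto
  with assms(1) obtain I J where I: "\<And>K. ((\<lambda>s. \<Sum>m<K. f m s) has_contour_integral I K) (linepath A B)"
    and J: "(g has_contour_integral J) (linepath A B)" and "I \<longlonglongrightarrow> J"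
    by (rule uniform_limit_contour_integral_linepath) (simp, blast)
  have "((\<lambda>s. \<Sum>m<K. f m s) has_contour_integral (\<Sum>m<K. i m)) (linepath A B)" for K
    by (intro has_contour_integral_sum assms(2)) simp
  then have "I = (\<lambda>K. \<Sum>m<K. i m)"
    by (intro ext has_contour_integral_unique[OF I])
  with \<open>I \<longlonglongrightarrow> J\<close> show ?thesis
    by (intro that[OF J]) (simp add: sums_def)
qed

lemma dirichlet_eval_mult_exp_ln:
  assumes "summable (\<lambda>m. norm (b m * of_nat m powr (- s)))" "b 0 = 0"
  shows "dirichlet_eval b s * exp (s * of_real (ln (real n))) =
    (\<Sum>m. b m * exp (s * of_real (ln (real n) - ln (real m))))"
proof -
  have term_eq: "b m * of_nat m powr (- s) * exp (s * of_real (ln (real n))) =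
      b m * exp (s * of_real (ln (real n) - ln (real m)))" for m
    using \<open>b 0 = 0\<close> by (cases "m = 0") (simp_all add: powr_def exp_add[symmetric] algebra_simps)
  have "dirichlet_eval b s * exp (s * of_real (ln (real n))) =
      (\<Sum>m. b m * of_nat m powr (- s) * exp (s * of_real (ln (real n))))"
    unfolding dirichlet_eval_def by (rule suminf_mult2[OF summable_norm_cancel[OF assms(1)]])
  also have "\<dots> = (\<Sum>m. b m * exp (s * of_real (ln (real n) - ln (real m))))"
    by (simp only: term_eq)
  finally show ?thesis .
qed

lemma has_contour_integral_dirichlet_termwise:
  assumes summable: "dirichlet_abs_summable b c" and "b 0 = 0" and "0 < n"
    and "Re A = c" "Re B = c"
  obtains J where
    "((\<lambda>s. dirichlet_eval b s * exp (s * of_real (ln (real n)))) has_contour_integral J) (linepath A B)"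
    "(\<lambda>m. b m * exp_linepath_integral A B (ln (real n) - ln (real m))) sums J"
proof -
  define t where "t m s = b m * exp (s * of_real (ln (real n) - ln (real m)))" for m s
  have on_line: "Re s = c" if "s \<in> path_image (linepath A B)" for s
    using in_closed_segment_imp_Re_in_closed_segment[of s A B] that assms(4,5) by simp
  have norm_t: "norm (t m s) = cmod (b m) * real m powr (- c) * real n powr c" if "Re s = c" for m s
    using \<open>b 0 = 0\<close> \<open>0 < n\<close> exp_mult_ln_diff_nat[of m n c] that
    by (cases "m = 0") (simp_all add: t_def norm_mult)
  have "uniform_limit (path_image (linepath A B)) (\<lambda>K s. \<Sum>m<K. t m s) (\<lambda>s. \<Sum>m. t m s) sequentially"
    using summable unfolding dirichlet_abs_summable_def
    by (intro Weierstrass_m_test[where M = "\<lambda>m. cmod (b m) * real m powr (- c) * real n powr c"]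
        summable_mult2) (simp_all add: norm_t on_line)
  moreover have "(t m has_contour_integral b m * exp_linepath_integral A B (ln (real n) - ln (real m)))
      (linepath A B)" for m
    unfolding t_def by (intro has_contour_integral_lmul has_contour_integral_exp_linepath)
  moreover have "continuous_on (path_image (linepath A B)) (t m)" for m
    unfolding t_def[abs_def] by (intro continuous_intros)
  ultimately obtain J where J: "((\<lambda>s. \<Sum>m. t m s) has_contour_integral J) (linepath A B)"
    and "(\<lambda>m. b m * exp_linepath_integral A B (ln (real n) - ln (real m))) sums J"
    by (rule has_contour_integral_suminf_linepath)
  moreover have "((\<lambda>s. dirichlet_eval b s * exp (s * of_real (ln (real n)))) has_contour_integral J) (linepath A B)"
    using J
  proof (rule has_contour_integral_eq)
    fix s assume "s \<in> path_image (linepath A B)"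
    then have "summable (\<lambda>m. norm (b m * of_nat m powr (- s)))"
      using summable_norm_dirichlet_terms[OF summable] on_line by simp
    then show "(\<Sum>m. t m s) = dirichlet_eval b s * exp (s * of_real (ln (real n)))"
      by (simp add: dirichlet_eval_mult_exp_ln \<open>b 0 = 0\<close> t_def)
  qed
  ultimately show ?thesis
    using that by blast
qed

(* Integrating termwise, only the term m = n does not oscillate along the line; all others
   contribute amounts bounded independently of the length of the segment. *)
lemma has_contour_integral_dirichlet_vertical:
  assumes summable: "dirichlet_abs_summable b c" and "b 0 = 0" and "0 < n"
    and "Re A = c" "Re B = c"
  obtains J where
    "((\<lambda>s. dirichlet_eval b s * exp (s * of_real (ln (real n)))) has_contour_integral J) (linepath A B)"
    "norm (J - b n * (B - A)) \<le> 2 * (real n + 1) * real n powr c * (\<Sum>m. cmod (b m) * real m powr (- c))"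
proof -
  define \<Delta> where "\<Delta> m = b m * exp_linepath_integral A B (ln (real n) - ln (real m))" for m
  define \<beta> where "\<beta> m = cmod (b m) * real m powr (- c)" for m
  define C where "C = 2 * (real n + 1) * real n powr c"
  obtain J where J: "((\<lambda>s. dirichlet_eval b s * exp (s * of_real (ln (real n)))) has_contour_integral J)
      (linepath A B)" and "\<Delta> sums J"
    unfolding \<Delta>_def[abs_def] using has_contour_integral_dirichlet_termwise[OF assms] .
  define R where "R m = (if m \<in> {n} then 0 else \<Delta> m)" for m
  have "R sums (J - b n * (B - A))"
    unfolding R_def[abs_def]
    by (rule sums_If_finite_set'[OF \<open>\<Delta> sums J\<close>]) (simp_all add: \<Delta>_def exp_linepath_integral_def)
  moreover have "norm (R m) \<le> C * \<beta> m" for m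
  proof (cases "m = n \<or> m = 0")
    case False
    then have "norm (R m) = cmod (b m) * norm (exp_linepath_integral A B (ln (real n) - ln (real m)))"
      by (simp add: R_def \<Delta>_def norm_mult)
    also have "\<dots> \<le> cmod (b m) * (2 * (real n + 1) * (real n powr c * real m powr (- c)))"
      using False \<open>0 < n\<close> assms(4,5) by (intro mult_left_mono norm_exp_linepath_integral_ln_le) auto
    finally show ?thesis
      by (simp add: C_def \<beta>_def mult_ac)
  qed (auto simp: R_def \<Delta>_def \<beta>_def C_def \<open>b 0 = 0\<close>)
  moreover have "summable \<beta>"
    using summable by (simp add: \<beta>_def[abs_def] dirichlet_abs_summable_def)
  ultimately have "norm (J - b n * (B - A)) \<le> (\<Sum>m. C * \<beta> m)"
    by (metis norm_suminf_le summable_mult sums_unique)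
  also have "\<dots> = C * (\<Sum>m. \<beta> m)"
    using \<open>summable \<beta>\<close> by (rule suminf_mult)
  finally show ?thesis
    using J that by (simp add: \<beta>_def C_def)
qed

lemma convex_holomorphic_primitive_linepath:
  assumes "convex S" "open S" "f holomorphic_on S"
  obtains G where "\<And>w z. w \<in> S \<Longrightarrow> z \<in> S \<Longrightarrow> (f has_contour_integral (G z - G w)) (linepath w z)"
proof -
  obtain G where G: "\<And>s. s \<in> S \<Longrightarrow> (G has_field_derivative f s) (at s within S)"
    using holomorphic_convex_primitive'[OF assms] by blast
  have "(f has_contour_integral (G z - G w)) (linepath w z)" if "w \<in> S" "z \<in> S" for w z
  proof -
    have "path_image (linepath w z) \<subseteq> S"
      using closed_segment_subset[OF that \<open>convex S\<close>] by simp
    from contour_integral_primitive[OF G valid_path_linepath this] show ?thesis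
      by simp
  qed
  then show ?thesis by (rule that)
qed

lemma norm_has_contour_integral_exp_ln_le:
  assumes "((\<lambda>s. F s * exp (s * of_real (ln (real n)))) has_contour_integral I) (linepath w z)"
    and "\<And>s. s \<in> closed_segment w z \<Longrightarrow> norm (F s) \<le> M"
    and "0 \<le> M" "0 < n" "Re w \<le> h" "Re z \<le> h"
  shows "norm I \<le> M * real n powr h * norm (z - w)"
proof (rule has_contour_integral_bound_linepath[OF assms(1)])
  show "0 \<le> M * real n powr h" using \<open>0 \<le> M\<close> by simp
  fix s assume s: "s \<in> closed_segment w z"
  have "Re s \<le> h"
    using closed_segment_subset[OF _ _ convex_halfspace_Re_le] assms(5,6) s by blast
  have "norm (F s * exp (s * of_real (ln (real n)))) = norm (F s) * exp (Re s * ln (real n))"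
    by (simp add: norm_mult)
  also have "\<dots> \<le> M * exp (h * ln (real n))"
    using assms(2)[OF s] \<open>0 \<le> M\<close> \<open>Re s \<le> h\<close> \<open>0 < n\<close>
    by (intro mult_mono) (simp_all add: mult_right_mono)
  finally show "norm (F s * exp (s * of_real (ln (real n)))) \<le> M * real n powr h"
    using \<open>0 < n\<close> by (simp add: powr_def mult.commute)
qed

(* By Cauchy's theorem on the rectangle with vertical sides at c' and c, the integral over the
   right side equals the integral over the other three, where n powr s is at most n powr c. *)
lemma bounded_holomorphic_vertical_contour_integral:
  fixes F :: "complex \<Rightarrow> complex"
  assumes holo: "F holomorphic_on {s. 0 < Re s}" and bounded: "\<And>s. 0 < Re s \<Longrightarrow> norm (F s) \<le> M"
    and "0 < c'" "c' < c" "0 < n" "0 < T"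
  obtains I where
    "((\<lambda>s. F s * exp (s * of_real (ln (real n)))) has_contour_integral I) (linepath (Complex c (- T)) (Complex c T))"
    "norm I \<le> M * real n powr c' * (2 * T) + 2 * (M * real n powr c * (c - c'))"
proof -
  define H where "H = {s::complex. 0 < Re s}"
  define \<phi> where "\<phi> = (\<lambda>s. F s * exp (s * of_real (ln (real n))))"
  have "norm (F 1) \<le> M"
    by (rule bounded) simp
  then have "0 \<le> M"
    by (meson norm_ge_zero order_trans)
  have "convex H" "open H"
    by (simp_all add: H_def convex_halfspace_Re_gt open_halfspace_Re_gt)
  moreover have "\<phi> holomorphic_on H"
    unfolding \<phi>_def H_def by (intro holomorphic_intros holo)
  ultimately obtain G where
    integral: "\<And>w z. w \<in> H \<Longrightarrow> z \<in> H \<Longrightarrow> (\<phi> has_contour_integral (G z - G w)) (linepath w z)"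
    by (rule convex_holomorphic_primitive_linepath) blast
  have side: "norm (G z - G w) \<le> M * real n powr h * norm (z - w)"
    if "w \<in> H" "z \<in> H" "Re w \<le> h" "Re z \<le> h" for w z h
    using integral[OF that(1,2), unfolded \<phi>_def] closed_segment_subset[OF that(1,2) \<open>convex H\<close>] that(3,4)
    by (intro norm_has_contour_integral_exp_ln_le[OF _ _ \<open>0 \<le> M\<close> \<open>0 < n\<close>])
      (auto simp: H_def intro!: bounded)
  define A1 where "A1 = Complex c' (- T)"
  define A2 where "A2 = Complex c (- T)"
  define A3 where "A3 = Complex c T"
  define A4 where "A4 = Complex c' T"
  have in_H: "A1 \<in> H" "A2 \<in> H" "A3 \<in> H" "A4 \<in> H"
    using \<open>0 < c'\<close> \<open>c' < c\<close> by (auto simp: H_def A1_def A2_def A3_def A4_def)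
  have "A4 - A1 = Complex 0 (2 * T)" "A3 - A4 = Complex (c - c') 0" "A2 - A1 = Complex (c - c') 0"
    by (simp_all add: A1_def A2_def A3_def A4_def complex_eq_iff)
  then have lengths: "norm (A4 - A1) = 2 * T" "norm (A3 - A4) = c - c'" "norm (A2 - A1) = c - c'"
    using \<open>0 < T\<close> \<open>c' < c\<close> by (simp_all add: cmod_eq_Im cmod_eq_Re)
  have "G A3 - G A2 = (G A4 - G A1) + (G A3 - G A4) - (G A2 - G A1)"
    by simp
  then have "norm (G A3 - G A2) \<le> norm (G A4 - G A1) + norm (G A3 - G A4) + norm (G A2 - G A1)"
    using norm_triangle_ineq[of "G A4 - G A1" "G A3 - G A4"]
      norm_triangle_ineq4[of "(G A4 - G A1) + (G A3 - G A4)" "G A2 - G A1"] by simp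
  also have "\<dots> \<le> M * real n powr c' * (2 * T) + M * real n powr c * (c - c') + M * real n powr c * (c - c')"
    using side[OF in_H(1,4), of c'] side[OF in_H(4,3), of c] side[OF in_H(1,2), of c] lengths \<open>c' < c\<close>
    by (intro add_mono) (simp_all add: A1_def A2_def A3_def A4_def)
  also have "\<dots> = M * real n powr c' * (2 * T) + 2 * (M * real n powr c * (c - c'))"
    by simp
  finally show ?thesis
    using integral[OF in_H(2,3)] unfolding \<phi>_def A2_def A3_def by (rule that[rotated])
qed

lemma le_of_forall_pos_mult_le_add:
  fixes x y K :: real
  assumes "\<And>T. 0 < T \<Longrightarrow> x * T \<le> y * T + K"
  shows "x \<le> y"
proof (rule ccontr)
  assume "\<not> x \<le> y"
  define T where "T = (\<bar>K\<bar> + 1) / (x - y)"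
  have "0 < T" "(x - y) * T = \<bar>K\<bar> + 1"
    using \<open>\<not> x \<le> y\<close> by (simp_all add: T_def)
  with assms[OF \<open>0 < T\<close>] show False
    by (simp add: left_diff_distrib)
qed

(* Perron's formula: the integral of F(s) n powr s over [c - iT, c + iT] is 2iT b n + O(1).
   Moving the segment to Re s = c', where the integrand is at most M n powr c', costs only O(1). *)
lemma norm_dirichlet_coeff_le_sup:
  fixes F :: "complex \<Rightarrow> complex"
  assumes holo: "F holomorphic_on {s. 0 < Re s}"
    and bounded: "\<And>s. 0 < Re s \<Longrightarrow> norm (F s) \<le> M"
    and summable: "dirichlet_abs_summable b c" and F_eq: "\<And>s. Re s = c \<Longrightarrow> F s = dirichlet_eval b s"
    and "b 0 = 0" "0 < c'" "c' < c" "0 < n"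
  shows "cmod (b n) \<le> M * real n powr c'"
proof -
  define K where "K = 2 * (M * real n powr c * (c - c')) +
    2 * (real n + 1) * real n powr c * (\<Sum>m. cmod (b m) * real m powr (- c))"
  have K: "cmod (b n) * (2 * T) \<le> M * real n powr c' * (2 * T) + K" if "0 < T" for T
  proof -
    obtain I where I: "((\<lambda>s. F s * exp (s * of_real (ln (real n)))) has_contour_integral I)
        (linepath (Complex c (- T)) (Complex c T))"
      and norm_I: "norm I \<le> M * real n powr c' * (2 * T) + 2 * (M * real n powr c * (c - c'))"
      using bounded_holomorphic_vertical_contour_integral[OF holo bounded \<open>0 < c'\<close> \<open>c' < c\<close> \<open>0 < n\<close> \<open>0 < T\<close>] .
    have "Re (Complex c (- T)) = c" "Re (Complex c T) = c" by simp_all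
    then obtain J where J: "((\<lambda>s. dirichlet_eval b s * exp (s * of_real (ln (real n)))) has_contour_integral J)
        (linepath (Complex c (- T)) (Complex c T))"
      and J_approx: "norm (J - b n * (Complex c T - Complex c (- T))) \<le>
        2 * (real n + 1) * real n powr c * (\<Sum>m. cmod (b m) * real m powr (- c))"
      by (rule has_contour_integral_dirichlet_vertical[OF summable \<open>b 0 = 0\<close> \<open>0 < n\<close>])
    have "((\<lambda>s. F s * exp (s * of_real (ln (real n)))) has_contour_integral J)
        (linepath (Complex c (- T)) (Complex c T))"
      using J by (rule has_contour_integral_eq)
        (use in_closed_segment_imp_Re_in_closed_segment in \<open>fastforce simp: F_eq\<close>)
    with I have "I = J"
      by (rule has_contour_integral_unique)
    have "Complex c T - Complex c (- T) = Complex 0 (2 * T)"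
      by (simp add: complex_eq_iff)
    then have "cmod (b n) * (2 * T) = norm (b n * (Complex c T - Complex c (- T)))"
      using \<open>0 < T\<close> by (simp add: norm_mult cmod_eq_Im)
    also have "\<dots> \<le> norm J + norm (J - b n * (Complex c T - Complex c (- T)))"
      using norm_triangle_sub[of "b n * (Complex c T - Complex c (- T))" J] by (simp add: norm_minus_commute)
    finally show ?thesis
      using norm_I J_approx unfolding \<open>I = J\<close> K_def by linarith
  qed
  show ?thesis
  proof (rule le_of_forall_pos_mult_le_add)
    fix T :: real assume "0 < T"
    then show "cmod (b n) * T \<le> M * real n powr c' * T + K"
      using K[of "T / 2"] by simp
  qed
qed

lemma Hinf_coeff_bound:
  assumes "Hinf b"
  obtains M where "\<And>n c'. 0 < c' \<Longrightarrow> cmod (b n) \<le> M * real n powr c'"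
proof -
  obtain F \<sigma> where "b 0 = 0" and holo: "F holomorphic_on {s. 0 < Re s}"
    and bdd: "bounded (F ` {s. 0 < Re s})"
    and F_eq: "\<And>s. \<sigma> < Re s \<Longrightarrow> summable (\<lambda>n. cmod (b n * of_nat n powr (- s))) \<and> F s = dirichlet_eval b s"
    using assms unfolding Hinf_def by blast
  obtain M where M: "\<And>s. 0 < Re s \<Longrightarrow> norm (F s) \<le> M"
    using bdd by (auto simp: bounded_iff)
  have "cmod (b n) \<le> M * real n powr c'" if "0 < c'" for n c'
  proof (cases "n = 0")
    case True
    then show ?thesis by (simp add: \<open>b 0 = 0\<close>)
  next
    case False
    define c where "c = max \<sigma> c' + 1"
    have "dirichlet_abs_summable b c"
      using F_eq[of "of_real c"] by (simp add: c_def dirichlet_abs_summable_def norm_mult norm_of_nat_powr)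
    then show ?thesis
      using F_eq False that
      by (intro norm_dirichlet_coeff_le_sup[OF holo M, of b c]) (auto simp: c_def \<open>b 0 = 0\<close>)
  qed
  then show ?thesis by (rule that)
qed

lemma summable_smooth_part_Hinf:
  assumes "Hinf b" "0 < Re z"
  shows "summable (\<lambda>n. norm (smooth_part N b n * of_nat n powr (- z)))"
proof -
  obtain M where M: "\<And>n c'. 0 < c' \<Longrightarrow> cmod (b n) \<le> M * real n powr c'"
    using Hinf_coeff_bound[OF assms(1)] by blast
  have "summable (\<lambda>n. M * smooth_part N (\<lambda>n. real n powr (- (Re z / 2))) n)"
    using assms(2) by (intro summable_mult summable_smooth_part_powr) simp
  then show ?thesis
  proof (rule summable_comparison_test')
    fix n
    show "norm (norm (smooth_part N b n * of_nat n powr (- z))) \<le>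
        M * smooth_part N (\<lambda>n. real n powr (- (Re z / 2))) n"
    proof (cases "n \<in> smooth N")
      case True
      have "cmod (b n) * real n powr (- Re z) \<le> M * real n powr (Re z / 2) * real n powr (- Re z)"
        using M[of "Re z / 2" n] assms(2) by (intro mult_right_mono) auto
      also have "\<dots> = M * real n powr (- (Re z / 2))"
        using smooth_pos[OF True] by (simp add: mult.assoc powr_add[symmetric])
      finally show ?thesis
        using True by (simp add: smooth_part_def norm_mult norm_of_nat_powr)
    qed (simp add: smooth_part_def)
  qed
qed

section \<open>Cyclic Dirichlet series\<close>

lemma dirichlet_eval_zero_imp_smooth_part_zero:
  assumes summable: "dirichlet_abs_summable a \<sigma>" and "a 0 = 0" "a 1 \<noteq> 0"
    and "\<sigma> < Re s" "dirichlet_eval a s = 0"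
  shows "\<exists>N z. \<sigma> < Re z \<and> dirichlet_eval (smooth_part N a) z = 0"
proof (rule ccontr)
  assume no_zero: "\<not> ?thesis"
  let ?S = "{s. \<sigma> < Re s}"
  have "dirichlet_eval a s \<noteq> 0"
  proof (rule Hurwitz_no_zeros[of ?S "\<lambda>N. dirichlet_eval (smooth_part N a)" "dirichlet_eval a"])
    show "open ?S" by (simp add: open_halfspace_Re_gt)
    show "connected ?S" by (simp add: convex_connected convex_halfspace_Re_gt)
    show "dirichlet_eval (smooth_part N a) holomorphic_on ?S" for N
      by (rule holomorphic_on_dirichlet_eval[OF dirichlet_abs_summable_smooth_part[OF summable]])
    show "dirichlet_eval a holomorphic_on ?S"
      by (rule holomorphic_on_dirichlet_eval[OF summable])
    show "uniform_limit K (\<lambda>N. dirichlet_eval (smooth_part N a)) (dirichlet_eval a) sequentially"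
      if "compact K" "K \<subseteq> ?S" for K
      using that(2) by (intro uniform_limit_on_subset[OF uniform_limit_smooth_part[OF summable \<open>a 0 = 0\<close>]]) auto
    show "\<not> dirichlet_eval a constant_on ?S"
    proof
      assume "dirichlet_eval a constant_on ?S"
      moreover obtain x where "\<sigma> < Re x" "dirichlet_eval a x \<noteq> 0"
        using dirichlet_eval_nonzero_somewhere[OF summable \<open>a 0 = 0\<close> \<open>a 1 \<noteq> 0\<close>] .
      ultimately show False
        using \<open>\<sigma> < Re s\<close> \<open>dirichlet_eval a s = 0\<close> by (auto simp: constant_on_def)
    qed
    show "dirichlet_eval (smooth_part N a) z \<noteq> 0" if "z \<in> ?S" for N z
      using no_zero that by auto
  qed (use \<open>\<sigma> < Re s\<close> in simp)
  then show False
    using \<open>dirichlet_eval a s = 0\<close> by simp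
qed

lemma mult_le_amgm:
  fixes A B t :: real
  assumes "0 < t"
  shows "A * B \<le> t / 2 * A\<^sup>2 + B\<^sup>2 / (2 * t)"
proof -
  have "0 \<le> (t * A - B)\<^sup>2" by simp
  then have "2 * t * (A * B) \<le> t\<^sup>2 * A\<^sup>2 + B\<^sup>2"
    by (simp add: power2_eq_square algebra_simps)
  then show ?thesis
    using assms by (simp add: field_simps power2_eq_square)
qed

(* Cauchy-Schwarz, in the weighted AM-GM form that avoids square roots. *)
lemma smooth_part_l2_bound:
  fixes g :: "nat \<Rightarrow> complex" and N :: nat
  assumes g: "summable (\<lambda>n. (cmod (g n))\<^sup>2)" and "0 < Re z" "0 < t"
  defines "W \<equiv> (\<Sum>n. smooth_part N (\<lambda>n. real n powr (- (2 * Re z))) n)"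
  shows "summable (\<lambda>n. norm (smooth_part N g n * of_nat n powr (- z)))"
    and "(\<Sum>n. norm (smooth_part N g n * of_nat n powr (- z))) \<le> t / 2 * (\<Sum>n. (cmod (g n))\<^sup>2) + W / (2 * t)"
proof -
  define w where "w = smooth_part N (\<lambda>n. real n powr (- (2 * Re z)))"
  have w: "summable w"
    unfolding w_def using \<open>0 < Re z\<close> by (intro summable_smooth_part_powr) simp
  define u where "u n = t / 2 * (cmod (g n))\<^sup>2 + w n / (2 * t)" for n
  have bound: "norm (smooth_part N g n * of_nat n powr (- z)) \<le> u n" for n
  proof (cases "n \<in> smooth N")
    case True
    have "norm (smooth_part N g n * of_nat n powr (- z)) = cmod (g n) * real n powr (- Re z)"
      using True by (simp add: smooth_part_def norm_mult norm_of_nat_powr)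
    also have "\<dots> \<le> t / 2 * (cmod (g n))\<^sup>2 + (real n powr (- Re z))\<^sup>2 / (2 * t)"
      using \<open>0 < t\<close> by (rule mult_le_amgm)
    also have "(real n powr (- Re z))\<^sup>2 = w n"
      using True by (simp add: w_def smooth_part_def power2_eq_square powr_add[symmetric])
    finally show ?thesis by (simp add: u_def)
  qed (use \<open>0 < t\<close> in \<open>simp add: smooth_part_def u_def w_def\<close>)
  have majorant: "summable u"
    unfolding u_def by (intro summable_add summable_mult summable_divide g w)
  then show "summable (\<lambda>n. norm (smooth_part N g n * of_nat n powr (- z)))"
    by (rule summable_comparison_test') (simp add: bound)
  then have "(\<Sum>n. norm (smooth_part N g n * of_nat n powr (- z))) \<le> suminf u"
    using majorant bound by (intro suminf_le) auto
  also have "\<dots> = t / 2 * (\<Sum>n. (cmod (g n))\<^sup>2) + W / (2 * t)"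
    unfolding u_def W_def w_def[symmetric]
    using g w by (simp add: suminf_add[symmetric] suminf_mult suminf_divide summable_mult summable_divide)
  finally show "(\<Sum>n. norm (smooth_part N g n * of_nat n powr (- z))) \<le> t / 2 * (\<Sum>n. (cmod (g n))\<^sup>2) + W / (2 * t)" .
qed

lemma one_le_suminf_smooth_part_powr:
  assumes "0 < y"
  shows "1 \<le> (\<Sum>n. smooth_part N (\<lambda>n. real n powr (- y)) n)"
proof -
  have "(\<Sum>n\<in>{1}. smooth_part N (\<lambda>n. real n powr (- y)) n) \<le> (\<Sum>n. smooth_part N (\<lambda>n. real n powr (- y)) n)"
    using summable_smooth_part_powr[OF assms] by (rule sum_le_suminf) (auto simp: smooth_part_def)
  then show ?thesis
    using one_in_smooth[of N] by (simp add: smooth_part_def)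
qed

lemma norm_dirichlet_eval_smooth_part_lt_one:
  fixes g :: "nat \<Rightarrow> complex"
  assumes g: "summable (\<lambda>n. (cmod (g n))\<^sup>2)" and "0 < Re z"
    and small: "(\<Sum>n. (cmod (g n))\<^sup>2) * (\<Sum>n. smooth_part N (\<lambda>n. real n powr (- (2 * Re z))) n) < 1"
  shows "norm (dirichlet_eval (smooth_part N g) z) < 1"
proof -
  define W where "W = (\<Sum>n. smooth_part N (\<lambda>n. real n powr (- (2 * Re z))) n)"
  have "1 \<le> W"
    unfolding W_def using \<open>0 < Re z\<close> by (intro one_le_suminf_smooth_part_powr) simp
  have "norm (dirichlet_eval (smooth_part N g) z) \<le> (\<Sum>n. norm (smooth_part N g n * of_nat n powr (- z)))"
    unfolding dirichlet_eval_def by (rule summable_norm[OF smooth_part_l2_bound(1)[OF g \<open>0 < Re z\<close> zero_less_one]])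
  also have "\<dots> \<le> W / 2 * (\<Sum>n. (cmod (g n))\<^sup>2) + W / (2 * W)"
    using smooth_part_l2_bound(2)[OF g \<open>0 < Re z\<close>, of W N] \<open>1 \<le> W\<close> by (simp add: W_def)
  also have "\<dots> < 1"
    using small \<open>1 \<le> W\<close> by (simp add: W_def field_simps)
  finally show ?thesis .
qed

lemma H2_delta_one: "H2 (\<lambda>n. if n = 1 then 1 else 0)"
  unfolding H2_def by (auto intro!: summable_finite[of "{1}"] split: if_split_asm)

lemma cyclic_H2_coeff_one_nonzero:
  assumes "cyclic_H2 a"
  shows "a 1 \<noteq> 0"
proof
  assume "a 1 = 0"
  define f :: "nat \<Rightarrow> complex" where "f n = (if n = 1 then 1 else 0)" for n
  obtain b where summable: "summable (\<lambda>n. (cmod (f n - dconv b a n))\<^sup>2)"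
    and small: "(\<Sum>n. (cmod (f n - dconv b a n))\<^sup>2) < 1"
    using assms H2_delta_one unfolding cyclic_H2_def f_def by (meson zero_less_one)
  have "dconv b a 1 = 0"
    using \<open>a 1 = 0\<close> by (simp add: dconv_def)
  then have "(\<Sum>n\<in>{1}. (cmod (f n - dconv b a n))\<^sup>2) = 1"
    by (simp add: f_def)
  moreover have "(\<Sum>n\<in>{1}. (cmod (f n - dconv b a n))\<^sup>2) \<le> (\<Sum>n. (cmod (f n - dconv b a n))\<^sup>2)"
    using summable by (rule sum_le_suminf) auto
  ultimately show False
    using small by simp
qed

lemma cyclic_H2_smooth_part_nonzero:
  assumes cyclic: "cyclic_H2 a" and "0 < Re z"
  shows "dirichlet_eval (smooth_part N a) z \<noteq> 0"
proof
  assume zero: "dirichlet_eval (smooth_part N a) z = 0"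
  define W where "W = (\<Sum>n. smooth_part N (\<lambda>n. real n powr (- (2 * Re z))) n)"
  have "1 \<le> W"
    unfolding W_def using \<open>0 < Re z\<close> by (intro one_le_suminf_smooth_part_powr) simp
  define f :: "nat \<Rightarrow> complex" where "f n = (if n = 1 then 1 else 0)" for n
  have "0 < 1 / W" using \<open>1 \<le> W\<close> by simp
  then obtain b where "Hinf b" and g_summable: "summable (\<lambda>n. (cmod (f n - dconv b a n))\<^sup>2)"
    and g_small: "(\<Sum>n. (cmod (f n - dconv b a n))\<^sup>2) < 1 / W"
    using cyclic H2_delta_one unfolding cyclic_H2_def f_def by blast
  have a_summable: "summable (\<lambda>n. norm (smooth_part N a n * of_nat n powr (- z)))"
    using cyclic \<open>0 < Re z\<close>
    by (intro smooth_part_l2_bound(1)[where t = 1]) (simp_all add: cyclic_H2_def H2_def)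
  have b_summable: "summable (\<lambda>n. norm (smooth_part N b n * of_nat n powr (- z)))"
    using \<open>Hinf b\<close> \<open>0 < Re z\<close> by (rule summable_smooth_part_Hinf)
  have ba_zero: "dirichlet_eval (smooth_part N (dconv b a)) z = 0"
    using dirichlet_eval_dconv(2)[OF b_summable a_summable] zero by (simp add: smooth_part_dconv)
  have ba_summable: "summable (\<lambda>n. smooth_part N (dconv b a) n * of_nat n powr (- z))"
    using dirichlet_eval_dconv(1)[OF b_summable a_summable]
    by (simp add: smooth_part_dconv summable_norm_cancel)
  have f_summable: "summable (\<lambda>n. f n * of_nat n powr (- z))"
    by (rule summable_finite[of "{1}"]) (auto simp: f_def)
  have f_sum: "(\<Sum>n. f n * of_nat n powr (- z)) = 1"
    by (subst suminf_finite[of "{1}"]) (auto simp: f_def)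
  have "smooth_part N (\<lambda>n. f n - dconv b a n) n * of_nat n powr (- z) =
      f n * of_nat n powr (- z) - smooth_part N (dconv b a) n * of_nat n powr (- z)" for n
    by (cases "n = 1") (auto simp: smooth_part_def f_def smooth_def)
  then have "dirichlet_eval (smooth_part N (\<lambda>n. f n - dconv b a n)) z = 1"
    using suminf_diff[OF f_summable ba_summable] f_sum ba_zero by (simp add: dirichlet_eval_def)
  moreover have "norm (dirichlet_eval (smooth_part N (\<lambda>n. f n - dconv b a n)) z) < 1"
    using g_summable \<open>0 < Re z\<close> g_small \<open>1 \<le> W\<close>
    by (intro norm_dirichlet_eval_smooth_part_lt_one) (simp_all add: W_def field_simps)
  ultimately show False by simp
qed

theorem proposition2p9:
  fixes a :: "nat \<Rightarrow> complex"
  assumes "H2 a" and "cyclic_H2 a"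
  shows "a 1 \<noteq> 0 \<and>
    (\<forall>s. ereal (Re s) > max (abscissa_abs a) 0 \<longrightarrow> dirichlet_eval a s \<noteq> 0)"
proof -
  have "a 1 \<noteq> 0"
    using \<open>cyclic_H2 a\<close> by (rule cyclic_H2_coeff_one_nonzero)
  moreover have "dirichlet_eval a s \<noteq> 0" if "ereal (Re s) > max (abscissa_abs a) 0" for s
  proof
    assume "dirichlet_eval a s = 0"
    obtain \<sigma> where "0 < \<sigma>" "\<sigma> < Re s" "dirichlet_abs_summable a \<sigma>"
      using \<open>ereal (Re s) > max (abscissa_abs a) 0\<close> by (rule abscissa_abs_less_imp_summable)
    then obtain N z where "\<sigma> < Re z" "dirichlet_eval (smooth_part N a) z = 0"
      using dirichlet_eval_zero_imp_smooth_part_zero \<open>H2 a\<close> \<open>a 1 \<noteq> 0\<close> \<open>dirichlet_eval a s = 0\<close>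
      unfolding H2_def by blast
    then show False
      using cyclic_H2_smooth_part_nonzero[OF \<open>cyclic_H2 a\<close>, of z N] \<open>0 < \<sigma>\<close> by simp
  qed
  ultimately show ?thesis by blast
qed

end
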